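(* Let $v_1,\dots,v_n\in\mathbb{H}^d$, not all zero, and write $V=[v_1,\dots,v_n]=V_1+V_2j$ with $V_1,V_2\in\mathbb{C}^{d\times n}$. Let $A=\frac1d\sum_j\|v_j\|^2$. The following are equivalent: (i) $V_{\mathbb{C}}=[[v_1]_{\mathbb{C}},\dots,[v_n]_{\mathbb{C}}]=\begin{pmatrix}V_1\\ \overline{V_2}\end{pmatrix}\in\mathbb{C}^{2d\times n}$ is a tight frame for $\mathbb{C}^{2d}$; (ii) $V_1V_1^*=V_2V_2^*=\frac12AI$ and $V_1V_2^T=V_2V_1^T=0$; (iii) $(V_1^*V_1+V_2^T\overline{V_2})^2=\frac12A\,(V_1^*V_1+V_2^T\overline{V_2})$; (iv) $\sum_j\sum_k|\operatorname{Co}_1(\langle v_j,v_k\rangle)|^2=\frac1{2d}\big(\sum_j\|v_j\|^2\big)^2$.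
   Context: Every quaternion (and entrywise every quaternionic vector or matrix) can be written uniquely as $z+wj$ with $z,w$ complex; note $jz=\bar zj$. The map $[\cdot]_{\mathbb{C}}:\mathbb{H}^d\to\mathbb{C}^{2d}$ is $z+wj\mapsto\begin{pmatrix}z\\ \bar w\end{pmatrix}$ ($z,w\in\mathbb{C}^d$), which is $\mathbb{C}$-linear for right scalar multiplication. For $q=z+wj\in\mathbb{H}$ define $\operatorname{Co}_1(q)=z$ and $\operatorname{Co}_2(q)=\bar w$. Inner products are Euclidean, $\langle v,w\rangle=\sum_j\overline{w_j}v_j$, on $\mathbb{H}^d$ and $\mathbb{C}^{2d}$. A sequence $(u_j)$ is a tight frame for $\mathbb{F}^D$ if $\sum_ju_ju_j^*=cI$ for some $c>0$. $A^T$ is the transpose, $A^*$ the conjugate transpose, $\overline{A}$ the entrywise conjugate. *)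

theory Defs
  imports "Jordan_Normal_Form.Schur_Decomposition"
begin

(* A quaternion q = z + w j, stored by its complex components (z, w). *)
datatype quat = Quat (qz: complex) (qw: complex)

(* Multiplication, derived from j z = cnj z j and j^2 = -1:
   (a + b j)(c + e j) = (a c - b cnj e) + (a e + b cnj c) j *)
definition qmult :: "quat \<Rightarrow> quat \<Rightarrow> quat" where
  "qmult p q = Quat (qz p * qz q - qw p * cnj (qw q)) (qz p * qw q + qw p * cnj (qz q))"

definition qadd :: "quat \<Rightarrow> quat \<Rightarrow> quat" where
  "qadd p q = Quat (qz p + qz q) (qw p + qw q)"

definition qconj :: "quat \<Rightarrow> quat" where
  "qconj q = Quat (cnj (qz q)) (- qw q)"

definition Co1 :: "quat \<Rightarrow> complex" where "Co1 q = qz q"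
definition Co2 :: "quat \<Rightarrow> complex" where "Co2 q = cnj (qw q)"

definition qnorm2 :: "quat \<Rightarrow> real" where
  "qnorm2 q = (cmod (qz q))\<^sup>2 + (cmod (qw q))\<^sup>2"

(* vectors in H^d : functions nat => quat, entries 0..<d *)
definition qinner :: "nat \<Rightarrow> (nat \<Rightarrow> quat) \<Rightarrow> (nat \<Rightarrow> quat) \<Rightarrow> quat" where
  "qinner d v w = foldr (\<lambda>l acc. qadd (qmult (qconj (w l)) (v l)) acc) [0..<d] (Quat 0 0)"

definition qvnorm2 :: "nat \<Rightarrow> (nat \<Rightarrow> quat) \<Rightarrow> real" where
  "qvnorm2 d v = (\<Sum>l<d. qnorm2 (v l))"

definition qcol :: "complex mat \<Rightarrow> complex mat \<Rightarrow> nat \<Rightarrow> (nat \<Rightarrow> quat)" where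
  "qcol V1 V2 j = (\<lambda>l. Quat (V1 $$ (l, j)) (V2 $$ (l, j)))"

definition frame_op :: "nat \<Rightarrow> complex vec list \<Rightarrow> complex mat" where
  "frame_op D us = mat D D (\<lambda>(a, b). \<Sum>j<length us. (us ! j) $ a * cnj ((us ! j) $ b))"

definition tight_frame :: "nat \<Rightarrow> complex vec list \<Rightarrow> bool" where
  "tight_frame D us \<longleftrightarrow> (\<forall>u\<in>set us. u \<in> carrier_vec D) \<and>
     (\<exists>c::real. c > 0 \<and> frame_op D us = complex_of_real c \<cdot>\<^sub>m 1\<^sub>m D)"

end

theory Submission
  imports Defs
begin

text \<open>
  Put \<open>W = [V\<^sub>1; conj V\<^sub>2]\<close>, so that \<open>S = W W\<^sup>*\<close> is the frame operator of the columns of \<open>W\<close>,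
  \<open>G = W\<^sup>* W\<close> is the matrix of (iii), and \<open>G\<^sub>k\<^sub>j = Co\<^sub>1\<langle>v\<^sub>j, v\<^sub>k\<rangle>\<close>.
  Both \<open>S\<close> and \<open>G\<close> have trace \<open>T = \<Sum>\<^sub>j \<parallel>v\<^sub>j\<parallel>\<^sup>2\<close>, and by cyclicity of the trace
  \<open>\<parallel>S\<parallel>\<^sub>F\<^sup>2 = tr (S\<^sup>2) = tr (G\<^sup>2) = \<parallel>G\<parallel>\<^sub>F\<^sup>2\<close>.
  Expanding \<open>\<parallel>S - (T/2d) I\<parallel>\<^sub>F\<^sup>2 = \<parallel>S\<parallel>\<^sub>F\<^sup>2 - T\<^sup>2/2d\<close> shows that \<open>S\<close> is scalar, i.e. the frame is
  tight, exactly when \<open>\<parallel>G\<parallel>\<^sub>F\<^sup>2 = T\<^sup>2/2d\<close>, which is (iv). If \<open>S = m I\<close> then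
  \<open>G\<^sup>2 = W\<^sup>* S W = m G\<close>; conversely \<open>G\<^sup>2 = m G\<close> gives \<open>\<parallel>G\<parallel>\<^sub>F\<^sup>2 = m T\<close>. Finally (ii) is \<open>S = (A/2) I\<close>
  read off blockwise: the blocks of \<open>S\<close> are \<open>V\<^sub>1V\<^sub>1\<^sup>*\<close>, \<open>V\<^sub>1V\<^sub>2\<^sup>T\<close> and the conjugates of
  \<open>V\<^sub>2V\<^sub>1\<^sup>T\<close>, \<open>V\<^sub>2V\<^sub>2\<^sup>*\<close>.
\<close>

lemma dim_mat_adjoint [simp]:
  "dim_row (mat_adjoint A) = dim_col A" "dim_col (mat_adjoint A) = dim_row A"
  unfolding mat_adjoint_def by auto

lemma index_mat_adjoint [simp]:
  "i < dim_col A \<Longrightarrow> j < dim_row A \<Longrightarrow> mat_adjoint A $$ (i, j) = cnj (A $$ (j, i))"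
  unfolding mat_adjoint_def by (simp add: mat_of_rows_index)

lemma mat_adjoint_carrier [simp, intro]: "A \<in> carrier_mat nr nc \<Longrightarrow> mat_adjoint A \<in> carrier_mat nc nr"
  by auto

lemma mat_adjoint_adjoint [simp]: "mat_adjoint (mat_adjoint A) = (A :: complex mat)"
  by (rule eq_matI) auto

lemma index_mult_mat_sum:
  "A \<in> carrier_mat nr m \<Longrightarrow> B \<in> carrier_mat m nc \<Longrightarrow> i < nr \<Longrightarrow> j < nc \<Longrightarrow>
   (A * B) $$ (i, j) = (\<Sum>k<m. A $$ (i, k) * B $$ (k, j))"
  by (auto simp: scalar_prod_def lessThan_atLeast0 intro!: sum.cong)

lemma mat_adjoint_mult:
  fixes A B :: "complex mat"
  assumes A: "A \<in> carrier_mat nr m" and B: "B \<in> carrier_mat m nc"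
  shows "mat_adjoint (A * B) = mat_adjoint B * mat_adjoint A"
proof (rule eq_matI)
  fix i j assume "i < dim_row (mat_adjoint B * mat_adjoint A)" "j < dim_col (mat_adjoint B * mat_adjoint A)"
  then have i: "i < nc" and j: "j < nr" using A B by auto
  have "mat_adjoint (A * B) $$ (i, j) = cnj ((A * B) $$ (j, i))"
    using A B i j by simp
  also have "\<dots> = (mat_adjoint B * mat_adjoint A) $$ (i, j)"
    using A B i j by (simp add: index_mult_mat_sum[of _ nc m _ nr] index_mult_mat_sum[of _ nr m _ nc]
        mult.commute del: index_mult_mat(1))
  finally show "mat_adjoint (A * B) $$ (i, j) = (mat_adjoint B * mat_adjoint A) $$ (i, j)" .
qed (use A B in auto)

lemma map_mat_cnj_cnj [simp]: "map_mat cnj (map_mat cnj A) = A"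
  by (rule eq_matI) auto

lemma map_mat_cnj_inject: "map_mat cnj A = map_mat cnj B \<longleftrightarrow> A = B"
  by (metis map_mat_cnj_cnj)

lemma map_mat_cnj_mult:
  "A \<in> carrier_mat nr m \<Longrightarrow> B \<in> carrier_mat m nc \<Longrightarrow> map_mat cnj (A * B) = map_mat cnj A * map_mat cnj B"
  by (rule eq_matI) (auto simp: index_mult_mat_sum[of _ nr m _ nc] simp del: index_mult_mat(1))

lemma mat_adjoint_map_cnj: "mat_adjoint (map_mat cnj A) = transpose_mat A"
  by (rule eq_matI) auto

lemma map_mat_cnj_transpose: "map_mat cnj (transpose_mat A) = mat_adjoint A"
  by (rule eq_matI) auto

lemma map_mat_cnj_adjoint: "map_mat cnj (mat_adjoint A) = transpose_mat A"
  by (rule eq_matI) auto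

lemma map_mat_cnj_scalar_one: "map_mat cnj (of_real c \<cdot>\<^sub>m 1\<^sub>m n) = of_real c \<cdot>\<^sub>m 1\<^sub>m n"
  by (rule eq_matI) auto

lemma map_mat_cnj_zero: "map_mat cnj (0\<^sub>m nr nc) = 0\<^sub>m nr nc"
  by (rule eq_matI) auto

definition mat_trace :: "'a :: comm_monoid_add mat \<Rightarrow> 'a" where
  "mat_trace M = (\<Sum>i<dim_row M. M $$ (i, i))"

definition sq_frobenius_norm :: "complex mat \<Rightarrow> real" where
  "sq_frobenius_norm M = (\<Sum>i<dim_row M. \<Sum>j<dim_col M. (cmod (M $$ (i, j)))\<^sup>2)"

lemma mat_trace_comm:
  fixes A B :: "'a :: comm_semiring_0 mat"
  assumes A: "A \<in> carrier_mat nr nc" and B: "B \<in> carrier_mat nc nr"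
  shows "mat_trace (A * B) = mat_trace (B * A)"
proof -
  have "mat_trace (A * B) = (\<Sum>i<nr. \<Sum>k<nc. A $$ (i, k) * B $$ (k, i))"
    unfolding mat_trace_def using A B by (simp add: index_mult_mat_sum[OF A B] del: index_mult_mat(1))
  also have "\<dots> = (\<Sum>k<nc. \<Sum>i<nr. B $$ (k, i) * A $$ (i, k))"
    by (subst sum.swap) (simp add: mult.commute)
  also have "\<dots> = mat_trace (B * A)"
    unfolding mat_trace_def using A B by (simp add: index_mult_mat_sum[OF B A] del: index_mult_mat(1))
  finally show ?thesis .
qed

lemma mat_trace_smult:
  fixes M :: "'a :: semiring_0 mat"
  shows "M \<in> carrier_mat n n \<Longrightarrow> mat_trace (c \<cdot>\<^sub>m M) = c * mat_trace M"
  unfolding mat_trace_def by (auto simp: sum_distrib_left intro!: sum.cong)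

lemma mat_trace_mult_adjoint:
  "M \<in> carrier_mat nr nc \<Longrightarrow> mat_trace (M * mat_adjoint M) = of_real (sq_frobenius_norm M)"
  unfolding mat_trace_def sq_frobenius_norm_def of_real_sum complex_norm_square
  by (auto simp: index_mult_mat_sum[of M nr nc _ nr] simp del: index_mult_mat(1) intro!: sum.cong)

lemma mat_trace_adjoint_mult:
  "W \<in> carrier_mat D n \<Longrightarrow> mat_trace (mat_adjoint W * W) = of_real (sq_frobenius_norm W)"
  by (metis mat_adjoint_carrier mat_trace_comm mat_trace_mult_adjoint)

lemma sq_frobenius_norm_eq_0_iff:
  "M \<in> carrier_mat nr nc \<Longrightarrow> sq_frobenius_norm M = 0 \<longleftrightarrow> M = 0\<^sub>m nr nc"
  by (auto simp: sq_frobenius_norm_def sum_nonneg_eq_0_iff sum_nonneg)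

lemma sq_frobenius_norm_map_cnj: "sq_frobenius_norm (map_mat cnj A) = sq_frobenius_norm A"
  unfolding sq_frobenius_norm_def by (auto intro!: sum.cong)

lemma sq_frobenius_norm_minus_scalar:
  assumes H: "H \<in> carrier_mat D D"
  shows "sq_frobenius_norm (H - of_real m \<cdot>\<^sub>m 1\<^sub>m D)
       = sq_frobenius_norm H - 2 * m * (\<Sum>i<D. Re (H $$ (i, i))) + real D * m\<^sup>2"
proof -
  have cmod_diff: "(cmod (z - of_real m))\<^sup>2 = (cmod z)\<^sup>2 - 2 * m * Re z + m\<^sup>2" for z
    unfolding cmod_power2 by (simp add: power2_eq_square algebra_simps)
  have row: "(\<Sum>j<D. (cmod ((H - of_real m \<cdot>\<^sub>m 1\<^sub>m D) $$ (i, j)))\<^sup>2)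
           = (\<Sum>j<D. (cmod (H $$ (i, j)))\<^sup>2) - 2 * m * Re (H $$ (i, i)) + m\<^sup>2" if i: "i < D" for i
  proof -
    have "(\<Sum>j<D. (cmod ((H - of_real m \<cdot>\<^sub>m 1\<^sub>m D) $$ (i, j)))\<^sup>2)
        = (\<Sum>j<D. (cmod (H $$ (i, j)))\<^sup>2 - (if j = i then 2 * m * Re (H $$ (i, i)) - m\<^sup>2 else 0))"
      using H i by (intro sum.cong) (auto simp: cmod_diff)
    then show ?thesis using i by (simp add: sum_subtractf)
  qed
  have dims: "dim_row (H - of_real m \<cdot>\<^sub>m 1\<^sub>m D) = D" "dim_col (H - of_real m \<cdot>\<^sub>m 1\<^sub>m D) = D"
    using H by auto
  have "sq_frobenius_norm (H - of_real m \<cdot>\<^sub>m 1\<^sub>m D)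
      = (\<Sum>i<D. (\<Sum>j<D. (cmod (H $$ (i, j)))\<^sup>2) - 2 * m * Re (H $$ (i, i)) + m\<^sup>2)"
    unfolding sq_frobenius_norm_def dims by (intro sum.cong refl row) simp
  also have "\<dots> = sq_frobenius_norm H - 2 * m * (\<Sum>i<D. Re (H $$ (i, i))) + real D * m\<^sup>2"
    using H by (simp add: sq_frobenius_norm_def sum.distrib sum_subtractf sum_distrib_left)
  finally show ?thesis .
qed

lemma eq_scalar_iff_sq_frobenius_norm:
  assumes H: "H \<in> carrier_mat D D" and D: "D > 0" and tr: "mat_trace H = of_real t"
  shows "H = of_real (t / D) \<cdot>\<^sub>m 1\<^sub>m D \<longleftrightarrow> sq_frobenius_norm H = t\<^sup>2 / D"
proof -
  have "(\<Sum>i<D. Re (H $$ (i, i))) = t"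
    using arg_cong[OF tr, of Re] H by (simp add: mat_trace_def)
  then have "sq_frobenius_norm (H - of_real (t / D) \<cdot>\<^sub>m 1\<^sub>m D)
      = sq_frobenius_norm H - 2 * (t / D) * t + real D * (t / D)\<^sup>2"
    by (simp only: sq_frobenius_norm_minus_scalar[OF H])
  also have "\<dots> = sq_frobenius_norm H - t\<^sup>2 / D"
    using D by (simp add: field_simps power2_eq_square)
  finally have "sq_frobenius_norm (H - of_real (t / D) \<cdot>\<^sub>m 1\<^sub>m D) = sq_frobenius_norm H - t\<^sup>2 / D" .
  moreover have "H - of_real (t / D) \<cdot>\<^sub>m 1\<^sub>m D \<in> carrier_mat D D"
    using H by auto
  moreover have "H - of_real (t / D) \<cdot>\<^sub>m 1\<^sub>m D = 0\<^sub>m D D \<longleftrightarrow> H = of_real (t / D) \<cdot>\<^sub>m 1\<^sub>m D"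
    using H by (auto simp: mat_eq_iff)
  ultimately show ?thesis
    by (metis sq_frobenius_norm_eq_0_iff eq_iff_diff_eq_0)
qed

lemma sq_frobenius_norm_frame_op_eq_gram:
  assumes W: "W \<in> carrier_mat D n"
  shows "sq_frobenius_norm (W * mat_adjoint W) = sq_frobenius_norm (mat_adjoint W * W)"
proof -
  have W': "mat_adjoint W \<in> carrier_mat n D" using W by auto
  have adj_S: "mat_adjoint (W * mat_adjoint W) = W * mat_adjoint W"
    by (simp add: mat_adjoint_mult[OF W W'])
  have adj_G: "mat_adjoint (mat_adjoint W * W) = mat_adjoint W * W"
    by (simp add: mat_adjoint_mult[OF W' W])
  have "of_real (sq_frobenius_norm (W * mat_adjoint W))
      = mat_trace ((W * mat_adjoint W) * mat_adjoint (W * mat_adjoint W))"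
    using W W' by (intro mat_trace_mult_adjoint[symmetric]) auto
  also have "\<dots> = mat_trace ((W * mat_adjoint W) * (W * mat_adjoint W))"
    by (simp only: adj_S)
  also have "\<dots> = mat_trace (W * (mat_adjoint W * W * mat_adjoint W))"
    using W W' by (simp add: assoc_mult_mat[of _ D n _ D _ D] assoc_mult_mat[OF W' W W'])
  also have "\<dots> = mat_trace ((mat_adjoint W * W * mat_adjoint W) * W)"
    using W W' by (intro mat_trace_comm) auto
  also have "\<dots> = mat_trace ((mat_adjoint W * W) * (mat_adjoint W * W))"
    using W W' by (subst assoc_mult_mat[of _ n n _ D _ n]) auto
  also have "\<dots> = mat_trace ((mat_adjoint W * W) * mat_adjoint (mat_adjoint W * W))"
    by (simp only: adj_G)
  also have "\<dots> = of_real (sq_frobenius_norm (mat_adjoint W * W))"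
    using W W' by (intro mat_trace_mult_adjoint) auto
  finally show ?thesis by simp
qed

lemma frame_op_cols: "W \<in> carrier_mat D n \<Longrightarrow> frame_op D (cols W) = W * mat_adjoint W"
  unfolding frame_op_def
  by (rule eq_matI) (auto simp: index_mult_mat_sum[of W D n _ D] simp del: index_mult_mat(1))

lemma tight_frame_iff_frame_op_eq_scalar:
  assumes W: "W \<in> carrier_mat D n" and D: "D > 0" and pos: "sq_frobenius_norm W > 0"
  shows "tight_frame D (cols W) \<longleftrightarrow> W * mat_adjoint W = of_real (sq_frobenius_norm W / D) \<cdot>\<^sub>m 1\<^sub>m D"
proof
  assume "tight_frame D (cols W)"
  then obtain c :: real where c: "W * mat_adjoint W = of_real c \<cdot>\<^sub>m 1\<^sub>m D"
    unfolding tight_frame_def frame_op_cols[OF W] by auto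
  have "of_real (sq_frobenius_norm W) = mat_trace (of_real c \<cdot>\<^sub>m 1\<^sub>m D :: complex mat)"
    using W by (simp flip: c add: mat_trace_mult_adjoint)
  also have "\<dots> = of_real (c * D)"
    by (simp add: mat_trace_smult[of _ D] mat_trace_def)
  finally have "c = sq_frobenius_norm W / D"
    using D by (simp add: field_simps del: of_real_mult)
  then show "W * mat_adjoint W = of_real (sq_frobenius_norm W / D) \<cdot>\<^sub>m 1\<^sub>m D"
    using c by simp
next
  assume "W * mat_adjoint W = of_real (sq_frobenius_norm W / D) \<cdot>\<^sub>m 1\<^sub>m D"
  moreover have "sq_frobenius_norm W / D > 0" using D pos by simp
  ultimately show "tight_frame D (cols W)"
    unfolding tight_frame_def frame_op_cols[OF W] using W by (auto simp: cols_def)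
qed

lemma tight_frame_iff_sq_frobenius_norm_frame_op:
  assumes W: "W \<in> carrier_mat D n" and D: "D > 0" and pos: "sq_frobenius_norm W > 0"
  shows "tight_frame D (cols W) \<longleftrightarrow> sq_frobenius_norm (W * mat_adjoint W) = (sq_frobenius_norm W)\<^sup>2 / D"
  unfolding tight_frame_iff_frame_op_eq_scalar[OF W D pos]
  using W D by (intro eq_scalar_iff_sq_frobenius_norm) (auto simp: mat_trace_mult_adjoint)

lemma tight_frame_iff_gram_sq:
  assumes W: "W \<in> carrier_mat D n" and D: "D > 0" and pos: "sq_frobenius_norm W > 0"
  shows "tight_frame D (cols W) \<longleftrightarrow>
    (mat_adjoint W * W) * (mat_adjoint W * W) = of_real (sq_frobenius_norm W / D) \<cdot>\<^sub>m (mat_adjoint W * W)"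
    (is "_ \<longleftrightarrow> ?G * ?G = ?m \<cdot>\<^sub>m ?G")
proof
  have W': "mat_adjoint W \<in> carrier_mat n D" using W by auto
  assume "tight_frame D (cols W)"
  then have S: "W * mat_adjoint W = ?m \<cdot>\<^sub>m 1\<^sub>m D"
    using tight_frame_iff_frame_op_eq_scalar[OF W D pos] by simp
  have "?G * ?G = mat_adjoint W * (W * ?G)"
    using W W' by (intro assoc_mult_mat) auto
  also have "\<dots> = mat_adjoint W * ((W * mat_adjoint W) * W)"
    using W W' by (subst assoc_mult_mat) auto
  also have "\<dots> = mat_adjoint W * (W * mat_adjoint W) * W"
    using W W' by (intro assoc_mult_mat[symmetric]) auto
  also have "\<dots> = ?m \<cdot>\<^sub>m ?G"
    using W W' by (simp add: S mult_smult_distrib[OF W' one_carrier_mat] mult_smult_assoc_mat[OF W' W])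
  finally show "?G * ?G = ?m \<cdot>\<^sub>m ?G" .
next
  have W': "mat_adjoint W \<in> carrier_mat n D" using W by auto
  have G: "?G \<in> carrier_mat n n" using W by auto
  assume GG: "?G * ?G = ?m \<cdot>\<^sub>m ?G"
  have adj_G: "mat_adjoint ?G = ?G"
    by (simp add: mat_adjoint_mult[OF W' W])
  have "of_real (sq_frobenius_norm ?G) = mat_trace (?G * mat_adjoint ?G)"
    using G by (intro mat_trace_mult_adjoint[symmetric])
  also have "\<dots> = ?m * mat_trace ?G"
    by (simp only: adj_G GG mat_trace_smult[OF G])
  also have "\<dots> = of_real ((sq_frobenius_norm W)\<^sup>2 / D)"
    using W by (simp add: mat_trace_adjoint_mult power2_eq_square)
  finally have "sq_frobenius_norm ?G = (sq_frobenius_norm W)\<^sup>2 / D"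
    using of_real_eq_iff by blast
  then show "tight_frame D (cols W)"
    using tight_frame_iff_sq_frobenius_norm_frame_op[OF W D pos] sq_frobenius_norm_frame_op_eq_gram[OF W]
    by simp
qed

lemma sum_lessThan_add:
  fixes f :: "nat \<Rightarrow> 'a :: comm_monoid_add"
  shows "(\<Sum>i<m + k. f i) = (\<Sum>i<m. f i) + (\<Sum>i<k. f (m + i))"
  by (induction k) (simp_all add: add_ac)

lemma index_append_rows:
  "A \<in> carrier_mat nr1 nc \<Longrightarrow> B \<in> carrier_mat nr2 nc \<Longrightarrow> i < nr1 + nr2 \<Longrightarrow> j < nc \<Longrightarrow>
   (A @\<^sub>r B) $$ (i, j) = (if i < nr1 then A $$ (i, j) else B $$ (i - nr1, j))"
  unfolding append_rows_def by auto

lemma sq_frobenius_norm_append_rows: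
  "A \<in> carrier_mat nr1 nc \<Longrightarrow> B \<in> carrier_mat nr2 nc \<Longrightarrow>
   sq_frobenius_norm (A @\<^sub>r B) = sq_frobenius_norm A + sq_frobenius_norm B"
  using carrier_matD[OF carrier_append_rows, of A nr1 nc B nr2] unfolding sq_frobenius_norm_def
  by (auto simp: sum_lessThan_add index_append_rows intro!: sum.cong)

lemma append_rows_mult_adjoint:
  fixes A B :: "complex mat"
  assumes A: "A \<in> carrier_mat nr1 n" and B: "B \<in> carrier_mat nr2 n"
  shows "(A @\<^sub>r B) * mat_adjoint (A @\<^sub>r B)
       = four_block_mat (A * mat_adjoint A) (A * mat_adjoint B) (B * mat_adjoint A) (B * mat_adjoint B)"
    (is "?L = ?R")
proof (rule eq_matI)
  have AB: "A @\<^sub>r B \<in> carrier_mat (nr1 + nr2) n" using A B by auto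
  fix i j assume "i < dim_row ?R" "j < dim_col ?R"
  then have i: "i < nr1 + nr2" and j: "j < nr1 + nr2" using A B by auto
  show "?L $$ (i, j) = ?R $$ (i, j)"
    using A B i j
    by (auto simp: index_mult_mat_sum[OF AB mat_adjoint_carrier[OF AB]] index_append_rows[OF A B] carrier_matD[OF AB]
        index_mult_mat_sum[OF A mat_adjoint_carrier[OF A]] index_mult_mat_sum[OF A mat_adjoint_carrier[OF B]]
        index_mult_mat_sum[OF B mat_adjoint_carrier[OF A]] index_mult_mat_sum[OF B mat_adjoint_carrier[OF B]]
        simp del: index_mult_mat(1) intro!: sum.cong)
qed (use carrier_matD[OF A] carrier_matD[OF B] carrier_matD[OF carrier_append_rows[OF A B]] in simp_all)

lemma adjoint_append_rows_mult:
  fixes A B :: "complex mat"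
  assumes A: "A \<in> carrier_mat nr1 n" and B: "B \<in> carrier_mat nr2 n"
  shows "mat_adjoint (A @\<^sub>r B) * (A @\<^sub>r B) = mat_adjoint A * A + mat_adjoint B * B"
    (is "?L = ?R")
proof (rule eq_matI)
  have AB: "A @\<^sub>r B \<in> carrier_mat (nr1 + nr2) n" using A B by auto
  fix i j assume "i < dim_row ?R" "j < dim_col ?R"
  then have i: "i < n" and j: "j < n" using A B by auto
  show "?L $$ (i, j) = ?R $$ (i, j)"
    using A B i j
    by (simp add: index_mult_mat_sum[OF mat_adjoint_carrier[OF AB] AB] sum_lessThan_add index_append_rows[OF A B]
        carrier_matD[OF AB]
        index_mult_mat_sum[OF mat_adjoint_carrier[OF A] A] index_mult_mat_sum[OF mat_adjoint_carrier[OF B] B]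
        del: index_mult_mat(1))
qed (use carrier_matD[OF A] carrier_matD[OF B] carrier_matD[OF carrier_append_rows[OF A B]] in simp_all)

lemma four_block_mat_eq_iff:
  assumes "A \<in> carrier_mat nr1 nc1" "B \<in> carrier_mat nr1 nc2" "C \<in> carrier_mat nr2 nc1" "D \<in> carrier_mat nr2 nc2"
    and "A' \<in> carrier_mat nr1 nc1" "B' \<in> carrier_mat nr1 nc2" "C' \<in> carrier_mat nr2 nc1" "D' \<in> carrier_mat nr2 nc2"
  shows "four_block_mat A B C D = four_block_mat A' B' C' D' \<longleftrightarrow> A = A' \<and> B = B' \<and> C = C' \<and> D = D'"
proof
  assume eq: "four_block_mat A B C D = four_block_mat A' B' C' D'"
  have entry: "four_block_mat A B C D $$ (i, j) = four_block_mat A' B' C' D' $$ (i, j)" for i j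
    by (simp only: eq)
  have "A $$ (i, j) = A' $$ (i, j)" if "i < nr1" "j < nc1" for i j
    using entry[of i j] that assms by simp
  moreover have "B $$ (i, j) = B' $$ (i, j)" if "i < nr1" "j < nc2" for i j
    using entry[of i "nc1 + j"] that assms by simp
  moreover have "C $$ (i, j) = C' $$ (i, j)" if "i < nr2" "j < nc1" for i j
    using entry[of "nr1 + i" j] that assms by simp
  moreover have "D $$ (i, j) = D' $$ (i, j)" if "i < nr2" "j < nc2" for i j
    using entry[of "nr1 + i" "nc1 + j"] that assms by simp
  ultimately show "A = A' \<and> B = B' \<and> C = C' \<and> D = D'"
    using assms by (auto intro!: eq_matI)
qed simp

lemma smult_one_four_block_mat:
  fixes c :: "'a :: semiring_1"
  shows "c \<cdot>\<^sub>m 1\<^sub>m (n1 + n2) = four_block_mat (c \<cdot>\<^sub>m 1\<^sub>m n1) (0\<^sub>m n1 n2) (0\<^sub>m n2 n1) (c \<cdot>\<^sub>m 1\<^sub>m n2)"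
  by (rule eq_matI) auto

lemma qz_foldr_qadd: "qz (foldr (\<lambda>l acc. qadd (f l) acc) xs q) = (\<Sum>l\<leftarrow>xs. qz (f l)) + qz q"
  by (induction xs) (auto simp: qadd_def)

lemma Co1_qinner: "Co1 (qinner d v u) = (\<Sum>l<d. cnj (qz (u l)) * qz (v l) + qw (u l) * cnj (qw (v l)))"
  unfolding Co1_def qinner_def qz_foldr_qadd
  by (simp add: qmult_def qconj_def sum_set_upt_conv_sum_list_nat[symmetric] lessThan_atLeast0)

lemma Co1_qinner_qcol:
  assumes V1: "V1 \<in> carrier_mat d n" and V2: "V2 \<in> carrier_mat d n" and j: "j < n" and k: "k < n"
  shows "Co1 (qinner d (qcol V1 V2 j) (qcol V1 V2 k))
       = (mat_adjoint V1 * V1 + transpose_mat V2 * map_mat cnj V2) $$ (k, j)"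
  using assms
  by (simp add: Co1_qinner qcol_def sum.distrib index_mult_mat_sum[OF mat_adjoint_carrier[OF V1] V1]
      index_mult_mat_sum[of "transpose_mat V2" n d "map_mat cnj V2" n] del: index_mult_mat(1))

lemma adjoint_quat_matrix_mult:
  assumes V1: "V1 \<in> carrier_mat d n" and V2: "V2 \<in> carrier_mat d n"
  shows "mat_adjoint (V1 @\<^sub>r map_mat cnj V2) * (V1 @\<^sub>r map_mat cnj V2)
       = mat_adjoint V1 * V1 + transpose_mat V2 * map_mat cnj V2"
  using V1 V2 by (simp add: adjoint_append_rows_mult[of _ d n _ d] mat_adjoint_map_cnj)

lemma sum_cmod_Co1_qinner_sq:
  assumes V1: "V1 \<in> carrier_mat d n" and V2: "V2 \<in> carrier_mat d n"
  shows "(\<Sum>j<n. \<Sum>k<n. (cmod (Co1 (qinner d (qcol V1 V2 j) (qcol V1 V2 k))))\<^sup>2)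
       = sq_frobenius_norm (mat_adjoint V1 * V1 + transpose_mat V2 * map_mat cnj V2)"
  unfolding sq_frobenius_norm_def using V1 V2
  by (subst sum.swap) (auto simp: Co1_qinner_qcol intro!: sum.cong)

lemma sq_frobenius_norm_quat_matrix:
  assumes V1: "V1 \<in> carrier_mat d n" and V2: "V2 \<in> carrier_mat d n"
  shows "sq_frobenius_norm (V1 @\<^sub>r map_mat cnj V2) = (\<Sum>j<n. qvnorm2 d (qcol V1 V2 j))"
proof -
  have "sq_frobenius_norm (V1 @\<^sub>r map_mat cnj V2) = sq_frobenius_norm V1 + sq_frobenius_norm V2"
    using V1 V2 by (simp add: sq_frobenius_norm_append_rows[of _ d n _ d] sq_frobenius_norm_map_cnj)
  also have "\<dots> = (\<Sum>j<n. qvnorm2 d (qcol V1 V2 j))"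
    using V1 V2 by (simp add: sq_frobenius_norm_def qvnorm2_def qnorm2_def qcol_def sum.distrib
        sum.swap[of _ "{..<n}"])
  finally show ?thesis .
qed

lemma quat_frame_op_eq_scalar_iff:
  assumes V1: "V1 \<in> carrier_mat d n" and V2: "V2 \<in> carrier_mat d n"
  shows "(V1 @\<^sub>r map_mat cnj V2) * mat_adjoint (V1 @\<^sub>r map_mat cnj V2) = of_real c \<cdot>\<^sub>m 1\<^sub>m (2 * d)
    \<longleftrightarrow> V1 * mat_adjoint V1 = of_real c \<cdot>\<^sub>m 1\<^sub>m d \<and> V2 * mat_adjoint V2 = of_real c \<cdot>\<^sub>m 1\<^sub>m d
      \<and> V1 * transpose_mat V2 = 0\<^sub>m d d \<and> V2 * transpose_mat V1 = 0\<^sub>m d d"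
proof -
  have V2': "map_mat cnj V2 \<in> carrier_mat d n" using V2 by auto
  have S: "(V1 @\<^sub>r map_mat cnj V2) * mat_adjoint (V1 @\<^sub>r map_mat cnj V2)
      = four_block_mat (V1 * mat_adjoint V1) (V1 * transpose_mat V2)
          (map_mat cnj (V2 * transpose_mat V1)) (map_mat cnj (V2 * mat_adjoint V2))"
    using V1 V2 by (simp add: append_rows_mult_adjoint[OF V1 V2'] mat_adjoint_map_cnj
        map_mat_cnj_mult[OF V2 mat_adjoint_carrier[OF V2]] map_mat_cnj_mult[of V2 d n "transpose_mat V1" d]
        map_mat_cnj_transpose map_mat_cnj_adjoint)
  have I: "of_real c \<cdot>\<^sub>m 1\<^sub>m (2 * d) = four_block_mat (of_real c \<cdot>\<^sub>m 1\<^sub>m d) (0\<^sub>m d d)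
      (map_mat cnj (0\<^sub>m d d)) (map_mat cnj (of_real c \<cdot>\<^sub>m 1\<^sub>m d))"
    by (simp add: mult_2 smult_one_four_block_mat map_mat_cnj_scalar_one map_mat_cnj_zero)
  show ?thesis
    unfolding S I using V1 V2
    by (subst four_block_mat_eq_iff[of _ d d _ d _ d])
      (auto simp: map_mat_cnj_inject)
qed

lemma qvnorm2_sum_pos:
  fixes v :: "nat \<Rightarrow> nat \<Rightarrow> quat"
  assumes "\<exists>j<n. \<exists>l<d. v j l \<noteq> Quat 0 0"
  shows "(\<Sum>j<n. qvnorm2 d (v j)) > 0"
proof -
  obtain j l where j: "j < n" and l: "l < d" and nz: "v j l \<noteq> Quat 0 0"
    using assms by auto
  have nonneg: "qnorm2 q \<ge> 0" for q by (simp add: qnorm2_def)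
  have "qz (v j l) \<noteq> 0 \<or> qw (v j l) \<noteq> 0"
    using nz by (cases "v j l") auto
  then have "0 < qnorm2 (v j l)"
    by (auto simp: qnorm2_def intro: add_pos_nonneg add_nonneg_pos)
  also have "\<dots> \<le> qvnorm2 d (v j)"
    unfolding qvnorm2_def using l nonneg by (intro member_le_sum) auto
  also have "\<dots> \<le> (\<Sum>j<n. qvnorm2 d (v j))"
    using j nonneg by (intro member_le_sum) (simp_all add: qvnorm2_def sum_nonneg)
  finally show ?thesis .
qed

theorem lemma9:
  fixes V1 V2 :: "complex mat" and d n :: nat and A :: real
  assumes V1: "V1 \<in> carrier_mat d n" and V2: "V2 \<in> carrier_mat d n"
    and nonzero: "\<exists>j<n. \<exists>l<d. qcol V1 V2 j l \<noteq> Quat 0 0"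
    and A_def: "A = (1 / real d) * (\<Sum>j<n. qvnorm2 d (qcol V1 V2 j))"
  shows
    "(tight_frame (2 * d) (cols (V1 @\<^sub>r map_mat cnj V2))
      \<longleftrightarrow> (V1 * mat_adjoint V1 = complex_of_real (A / 2) \<cdot>\<^sub>m 1\<^sub>m d
           \<and> V2 * mat_adjoint V2 = complex_of_real (A / 2) \<cdot>\<^sub>m 1\<^sub>m d
           \<and> V1 * transpose_mat V2 = 0\<^sub>m d d
           \<and> V2 * transpose_mat V1 = 0\<^sub>m d d))
   \<and> (tight_frame (2 * d) (cols (V1 @\<^sub>r map_mat cnj V2))
      \<longleftrightarrow> (let G = mat_adjoint V1 * V1 + transpose_mat V2 * map_mat cnj V2
           in G * G = complex_of_real (A / 2) \<cdot>\<^sub>m G))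
   \<and> (tight_frame (2 * d) (cols (V1 @\<^sub>r map_mat cnj V2))
      \<longleftrightarrow> (\<Sum>j<n. \<Sum>k<n. (cmod (Co1 (qinner d (qcol V1 V2 j) (qcol V1 V2 k))))\<^sup>2)
           = (1 / (2 * real d)) * (\<Sum>j<n. qvnorm2 d (qcol V1 V2 j))\<^sup>2)"
proof -
  define W where "W = V1 @\<^sub>r map_mat cnj V2"
  define G where "G = mat_adjoint V1 * V1 + transpose_mat V2 * map_mat cnj V2"
  have W: "W \<in> carrier_mat (2 * d) n" using V1 V2 by (simp add: W_def mult_2)
  have norm: "sq_frobenius_norm W = (\<Sum>j<n. qvnorm2 d (qcol V1 V2 j))"
    unfolding W_def by (rule sq_frobenius_norm_quat_matrix[OF V1 V2])
  have pos: "sq_frobenius_norm W > 0"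
    unfolding norm using nonzero by (rule qvnorm2_sum_pos)
  have D: "2 * d > 0" using nonzero by auto
  have A2: "A / 2 = sq_frobenius_norm W / real (2 * d)" by (simp add: A_def norm)
  have gram: "mat_adjoint W * W = G"
    unfolding W_def G_def by (rule adjoint_quat_matrix_mult[OF V1 V2])
  note ii = tight_frame_iff_frame_op_eq_scalar[OF W D pos, folded A2, unfolded W_def,
      unfolded quat_frame_op_eq_scalar_iff[OF V1 V2]]
  note iii = tight_frame_iff_gram_sq[OF W D pos, folded A2, unfolded gram]
  have iv: "tight_frame (2 * d) (cols W) \<longleftrightarrow>
      (\<Sum>j<n. \<Sum>k<n. (cmod (Co1 (qinner d (qcol V1 V2 j) (qcol V1 V2 k))))\<^sup>2)
        = (1 / (2 * real d)) * (\<Sum>j<n. qvnorm2 d (qcol V1 V2 j))\<^sup>2"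
    using tight_frame_iff_sq_frobenius_norm_frame_op[OF W D pos]
    unfolding sq_frobenius_norm_frame_op_eq_gram[OF W] gram G_def sum_cmod_Co1_qinner_sq[OF V1 V2] norm
    by simp
  show ?thesis
    using ii iii iv unfolding W_def G_def Let_def by blast
qed

end
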